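(* The EndPoint mechanism $2$-approximates the optimal Nash welfare.
   Context: Two facilities are located on $[0,1]$; $n\ge1$ agents (any $n$) have locations $x_1\le\dots\le x_n$ in $[0,1]$. For facilities at $y_1,y_2$, agent $i$'s utility is $u_i=1-\min(|x_i-y_1|,|x_i-y_2|)$; the Nash welfare is $\left(\prod_i u_i\right)^{1/n}$. The EndPoint mechanism places one facility at $x_1$ and the other at $x_n$. For a mechanism $M$, the approximation ratio of the Nash welfare is the supremum over all profiles $x$ (all numbers of agents) of $\mathrm{OPT}(x)/\mathrm{NW}(M(x))$, where $\mathrm{OPT}(x)$ is the maximum Nash welfare over all placements of two facilities in $[0,1]$; $M$ "$\alpha$-approximates" if this ratio equals $\alpha$. *)

theory Defs
  imports Complex_Main
begin

definition valid_profile :: "nat \<Rightarrow> (nat \<Rightarrow> real) \<Rightarrow> bool" where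
  "valid_profile n x \<longleftrightarrow> n \<ge> 1 \<and> (\<forall>i<n. 0 \<le> x i \<and> x i \<le> 1)
      \<and> (\<forall>i j. i \<le> j \<and> j < n \<longrightarrow> x i \<le> x j)"

definition utility :: "real \<Rightarrow> real \<Rightarrow> real \<Rightarrow> real" where
  "utility xi y1 y2 = 1 - min \<bar>xi - y1\<bar> \<bar>xi - y2\<bar>"

definition nash_welfare :: "nat \<Rightarrow> (nat \<Rightarrow> real) \<Rightarrow> real \<Rightarrow> real \<Rightarrow> real" where
  "nash_welfare n x y1 y2 = root n (\<Prod>i<n. utility (x i) y1 y2)"

definition opt_nw :: "nat \<Rightarrow> (nat \<Rightarrow> real) \<Rightarrow> real" where
  "opt_nw n x = Sup {nash_welfare n x y1 y2 | y1 y2. y1 \<in> {0..1} \<and> y2 \<in> {0..1}}"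

definition endpoint_mech :: "nat \<Rightarrow> (nat \<Rightarrow> real) \<Rightarrow> real \<times> real" where
  "endpoint_mech n x = (x 0, x (n - 1))"

definition nw_ratio :: "(nat \<Rightarrow> (nat \<Rightarrow> real) \<Rightarrow> real \<times> real) \<Rightarrow> nat \<Rightarrow> (nat \<Rightarrow> real) \<Rightarrow> real" where
  "nw_ratio M n x = opt_nw n x / nash_welfare n x (fst (M n x)) (snd (M n x))"

text \<open>The approximation ratio of M equals alpha: alpha is the supremum (least upper bound)
  of the ratios over all valid profiles.\<close>

definition approximates :: "(nat \<Rightarrow> (nat \<Rightarrow> real) \<Rightarrow> real \<times> real) \<Rightarrow> real \<Rightarrow> bool" where
  "approximates M \<alpha> \<longleftrightarrow>
     (\<forall>n x. valid_profile n x \<longrightarrow> nw_ratio M n x \<le> \<alpha>) \<and>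
     (\<forall>\<beta> < \<alpha>. \<exists>n x. valid_profile n x \<and> \<beta> < nw_ratio M n x)"

end

theory Submission
  imports Defs
begin

text \<open>Every agent lies between the two extreme agents, so under EndPoint its distance to the
  nearer facility is at most half the spread, i.e. at most 1/2; hence EndPoint has Nash welfare
  at least 1/2, while no placement exceeds 1. Conversely, put one agent at 0, one at 1 and
  n - 2 agents at 1/2: EndPoint serves the middle agents with utility 1/2 each, whereas
  facilities at 0 and 1/2 lose only 1/2 on the agent at 1. The ratio is 2 / root n 8, which
  tends to 2.\<close>

lemma utility_bounds:
  assumes "xi \<in> {0..1}" "y1 \<in> {0..1}" "y2 \<in> {0..1}"
  shows "0 \<le> utility xi y1 y2" and "utility xi y1 y2 \<le> 1"
  using assms unfolding utility_def by (auto simp: min_def abs_if)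

lemma utility_between_ge_half:
  assumes "a \<le> xi" "xi \<le> b" "b - a \<le> 1"
  shows "1/2 \<le> utility xi a b"
  using assms unfolding utility_def by (auto simp: min_def abs_if)

lemma valid_profile_in_unit:
  assumes "valid_profile n x" "i < n"
  shows "x i \<in> {0..1}"
  using assms unfolding valid_profile_def by auto

lemma nash_welfare_le_1:
  assumes "valid_profile n x" "y1 \<in> {0..1}" "y2 \<in> {0..1}"
  shows "nash_welfare n x y1 y2 \<le> 1"
proof -
  have "(\<Prod>i<n. utility (x i) y1 y2) \<le> (\<Prod>i<n. 1)"
    using assms valid_profile_in_unit utility_bounds by (intro prod_mono) auto
  moreover have "0 < n"
    using assms(1) unfolding valid_profile_def by simp
  ultimately show ?thesis
    unfolding nash_welfare_def by simp
qed

lemma nash_welfare_ge: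
  assumes "0 < n" "0 \<le> c" "\<And>i. i < n \<Longrightarrow> c \<le> utility (x i) y1 y2"
  shows "c \<le> nash_welfare n x y1 y2"
proof -
  have "c ^ n \<le> (\<Prod>i<n. utility (x i) y1 y2)"
    using prod_mono[of "{..<n}" "\<lambda>_. c"] assms by fastforce
  then have "root n (c ^ n) \<le> nash_welfare n x y1 y2"
    unfolding nash_welfare_def using assms(1) by simp
  then show ?thesis
    using assms(1,2) by (simp add: real_root_power_cancel)
qed

lemma opt_nw_le_1:
  assumes "valid_profile n x"
  shows "opt_nw n x \<le> 1"
  unfolding opt_nw_def by (rule cSup_least) (use nash_welfare_le_1[OF assms] in force)+

lemma nash_welfare_le_opt_nw:
  assumes "valid_profile n x" "y1 \<in> {0..1}" "y2 \<in> {0..1}"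
  shows "nash_welfare n x y1 y2 \<le> opt_nw n x"
  unfolding opt_nw_def
  by (rule cSup_upper) (use assms nash_welfare_le_1[OF assms(1)] in \<open>auto simp: bdd_above_def\<close>)

lemma endpoint_nash_welfare_ge_half:
  assumes "valid_profile n x"
  shows "1/2 \<le> nash_welfare n x (x 0) (x (n - 1))"
proof (rule nash_welfare_ge)
  show "0 < n"
    using assms unfolding valid_profile_def by simp
  fix i assume "i < n"
  then have "x 0 \<le> x i" "x i \<le> x (n - 1)" "x 0 \<in> {0..1}" "x (n - 1) \<in> {0..1}"
    using assms valid_profile_in_unit[OF assms] unfolding valid_profile_def by auto
  then show "1/2 \<le> utility (x i) (x 0) (x (n - 1))"
    by (intro utility_between_ge_half) auto
qed simp

lemma endpoint_ratio_le_2: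
  assumes "valid_profile n x"
  shows "nw_ratio endpoint_mech n x \<le> 2"
proof -
  have "opt_nw n x / nash_welfare n x (x 0) (x (n - 1)) \<le> 1 / (1/2)"
    using opt_nw_le_1[OF assms] endpoint_nash_welfare_ge_half[OF assms] by (intro frac_le) auto
  then show ?thesis
    unfolding nw_ratio_def endpoint_mech_def by simp
qed

definition midpoint_profile :: "nat \<Rightarrow> nat \<Rightarrow> real" where
  "midpoint_profile n i = (if i = 0 then 0 else if i = n - 1 then 1 else 1/2)"

lemma valid_midpoint_profile: "3 \<le> n \<Longrightarrow> valid_profile n (midpoint_profile n)"
  unfolding valid_profile_def midpoint_profile_def by auto

lemma prod_lessThan_split_ends:
  fixes f :: "nat \<Rightarrow> 'a::comm_monoid_mult"
  assumes "2 \<le> n"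
  shows "(\<Prod>i<n. f i) = f 0 * f (n - 1) * (\<Prod>i\<in>{1..<n - 1}. f i)"
proof -
  have "{..<n} = insert 0 (insert (n - 1) {1..<n - 1})"
    using assms by auto
  then show ?thesis
    using assms by (simp add: mult.assoc)
qed

lemma midpoint_profile_ratio_ge:
  assumes "3 \<le> n"
  shows "2 / root n 8 \<le> nw_ratio endpoint_mech n (midpoint_profile n)"
proof -
  let ?x = "midpoint_profile n"
  have "nash_welfare n ?x 0 (1/2) = root n (1/2)"
    using assms unfolding nash_welfare_def
    by (simp add: prod_lessThan_split_ends midpoint_profile_def utility_def)
  then have opt: "root n (1/2) \<le> opt_nw n ?x"
    using nash_welfare_le_opt_nw[OF valid_midpoint_profile[OF assms], of 0 "1/2"] by simp
  have "(\<Prod>i<n. utility (?x i) (?x 0) (?x (n - 1))) = (1/2) ^ (n - 2)"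
    using assms by (simp add: prod_lessThan_split_ends midpoint_profile_def utility_def numeral_2_eq_2)
  then have endpoint: "nash_welfare n ?x (?x 0) (?x (n - 1)) = root n ((1/2) ^ (n - 2))"
    by (simp add: nash_welfare_def)
  have "root n (1/2) / root n ((1/2) ^ (n - 2)) = root n ((1/2) / (1/2) ^ (n - 2))"
    by (rule real_root_divide[symmetric])
  also have "(1/2 :: real) / (1/2) ^ (n - 2) = 2 ^ n / 8"
    using assms by (simp add: power_diff field_simps)
  also have "root n (2 ^ n / 8) = 2 / root n 8"
    using assms by (simp add: real_root_divide real_root_power_cancel)
  finally have "2 / root n 8 = root n (1/2) / root n ((1/2) ^ (n - 2))" ..
  also have "\<dots> \<le> opt_nw n ?x / root n ((1/2) ^ (n - 2))"
    using opt assms by (intro divide_right_mono) auto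
  finally show ?thesis
    unfolding nw_ratio_def endpoint_mech_def fst_conv snd_conv endpoint .
qed

theorem theorem14:
  shows "approximates endpoint_mech 2"
  unfolding approximates_def
proof (intro conjI allI impI)
  fix n x assume "valid_profile n x"
  then show "nw_ratio endpoint_mech n x \<le> 2"
    by (rule endpoint_ratio_le_2)
next
  fix \<beta> :: real assume "\<beta> < 2"
  have "(\<lambda>n. 2 / root n 8) \<longlonglongrightarrow> 2 / 1"
    by (intro tendsto_divide tendsto_const LIMSEQ_root_const) auto
  then have "\<forall>\<^sub>F n in sequentially. \<beta> < 2 / root n 8"
    using \<open>\<beta> < 2\<close> by (simp add: order_tendstoD(1))
  then have "\<forall>\<^sub>F n in sequentially. 3 \<le> n \<and> \<beta> < 2 / root n 8"
    by (intro eventually_conj eventually_ge_at_top)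
  then obtain n where "3 \<le> n" "\<beta> < 2 / root n 8"
    using eventually_happens'[OF sequentially_bot] by blast
  then show "\<exists>n x. valid_profile n x \<and> \<beta> < nw_ratio endpoint_mech n x"
    using valid_midpoint_profile midpoint_profile_ratio_ge by (meson less_le_trans)
qed

end
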